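(* Suppose $1/d\le\lambda\le1$, and let $L=\{0\}\subset\mathbb R^d$ and $C=\mathbb R^d_{\ge0}$ (the positive orthant). When each entry of the parameter $\theta\in\mathbb R^d$ is independently observed $\mathrm{Poi}(\lambda)$ times and each observation is corrupted by independent standard Gaussian noise, we have \[ \inf_\psi\mathcal E(\psi;L,C,\epsilon)\ge\frac12\quad\text{whenever}\quad\epsilon^2\le\frac1{16}\sqrt{\frac d\lambda}. \]
   Context: Observation model: given $\theta\in\mathbb R^d$, draw counts $\kappa_1,\dots,\kappa_d$ i.i.d. $\mathrm{Poi}(\lambda)$ and, for each $i$, $\kappa_i$ independent observations $\theta_i+g$ with $g\sim\mathcal N(0,1)$ independent; $y$ denotes the full observation and $\mathbb E_\theta$ expectation under parameter $\theta$. For $C_1\subset C_2\subset\mathbb R^d$ and $\epsilon>0$, let $\mathbb B_2(C_1;\epsilon)=\{\theta:\inf_{x\in C_1}\|\theta-x\|_2\le\epsilon\}$, and for a measurable test $\psi$ of the observations with values in $\{0,1\}$, $\mathcal E(\psi;C_1,C_2,\epsilon)=\sup_{\theta\in C_1}\mathbb E_\theta[\psi(y)]+\sup_{\theta\in C_2\setminus\mathbb B_2(C_1;\epsilon)}\mathbb E_\theta[1-\psi(y)]$. The infimum is over all such tests. *)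

theory Defs
  imports "HOL-Analysis.Analysis" "HOL-Probability.Probability"
begin

text \<open>Observation of a single coordinate: the pair (count k, sequence z), where
  z j for j < k are the k noisy observations and z j = undefined (constant) for j \<ge> k,
  so that a measurable test only sees the count and the first k observations.\<close>

definition coord_space :: "(nat \<times> (nat \<Rightarrow> real)) measure" where
  "coord_space = count_space UNIV \<Otimes>\<^sub>M (\<Pi>\<^sub>M j\<in>(UNIV::nat set). (borel :: real measure))"

definition std_gauss_shift :: "real \<Rightarrow> real measure" where
  "std_gauss_shift t = density lborel (normal_density t 1)"

definition coord_obs :: "real \<Rightarrow> real \<Rightarrow> (nat \<times> (nat \<Rightarrow> real)) measure" where
  "coord_obs lam t =
     measure_pmf (poisson_pmf lam) \<bind>
       (\<lambda>k. distr (\<Pi>\<^sub>M j\<in>{..<k}. std_gauss_shift t) coord_space (\<lambda>z. (k, z)))"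

definition obs_space :: "('n::finite \<Rightarrow> nat \<times> (nat \<Rightarrow> real)) measure" where
  "obs_space = (\<Pi>\<^sub>M i\<in>UNIV. coord_space)"

definition obs :: "real \<Rightarrow> real ^ 'n::finite \<Rightarrow> ('n \<Rightarrow> nat \<times> (nat \<Rightarrow> real)) measure" where
  "obs lam \<theta> = (\<Pi>\<^sub>M i\<in>UNIV. coord_obs lam (\<theta> $ i))"

definition is_test :: "(('n::finite \<Rightarrow> nat \<times> (nat \<Rightarrow> real)) \<Rightarrow> real) \<Rightarrow> bool" where
  "is_test \<psi> \<longleftrightarrow> \<psi> \<in> borel_measurable obs_space \<and> (\<forall>y. \<psi> y \<in> {0, 1})"

definition enlarge :: "(real ^ 'n::finite) set \<Rightarrow> real \<Rightarrow> (real ^ 'n) set" where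
  "enlarge C1 \<epsilon> = {\<theta>. (INF x\<in>C1. norm (\<theta> - x)) \<le> \<epsilon>}"

definition test_risk ::
  "real \<Rightarrow> (('n::finite \<Rightarrow> nat \<times> (nat \<Rightarrow> real)) \<Rightarrow> real) \<Rightarrow> (real ^ 'n) set \<Rightarrow> (real ^ 'n) set \<Rightarrow> real \<Rightarrow> real" where
  "test_risk lam \<psi> C1 C2 \<epsilon> =
     (SUP \<theta>\<in>C1. integral\<^sup>L (obs lam \<theta>) \<psi>)
     + (SUP \<theta>\<in>C2 - enlarge C1 \<epsilon>. integral\<^sup>L (obs lam \<theta>) (\<lambda>y. 1 - \<psi> y))"

definition minimax_risk :: "real \<Rightarrow> (real ^ 'n::finite) set \<Rightarrow> (real ^ 'n) set \<Rightarrow> real \<Rightarrow> real" where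
  "minimax_risk lam C1 C2 \<epsilon> = (INF \<psi>\<in>{\<psi>. is_test \<psi>}. test_risk lam \<psi> C1 C2 \<epsilon>)"

end

theory Submission
  imports Defs
begin

text \<open>
  Le Cam's method with a mixture alternative. Split the coordinates into \<open>s\<close> disjoint blocks
  of size \<open>b\<close> and put the uniform prior on the nonnegative vectors that equal \<open>a\<close> at one
  coordinate of each block and vanish elsewhere; they have norm \<open>a \<surd>s > \<epsilon>\<close>. Given \<open>k\<close>
  samples of a coordinate, its likelihood ratio against parameter \<open>0\<close> is
  \<open>\<Prod>j<k. exp (t z\<^sub>j - t\<^sup>2/2)\<close>, and averaging over the Poisson count gives
  \<open>E\<^sub>0 (L\<^sub>\<theta> L\<^sub>\<theta>') = exp (\<lambda> \<Sum>\<^sub>i (exp (\<theta>\<^sub>i \<theta>'\<^sub>i) - 1))\<close>.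
  For the prior, the second moment of the mixture likelihood ratio \<open>L\<close> is therefore
  \<open>(1 + (exp (\<lambda> (exp a\<^sup>2 - 1)) - 1) / b)\<^sup>s\<close>, which the hypothesis on \<open>\<epsilon>\<close> allows to keep
  below \<open>5/4\<close>. Since \<open>\<psi> (L - 1) \<le> (L - 1)\<^sup>2 + 1/4\<close> for \<open>0 \<le> \<psi> \<le> 1\<close>, every test then
  has mean under the mixture at most its mean under \<open>0\<close> plus \<open>1/2\<close>, so its two errors sum
  to at least \<open>1/2\<close>.
\<close>

lemma indicator_PiE_eq_prod:
  assumes "x \<in> extensional I" "finite I"
  shows "indicator (Pi\<^sub>E I A) x = (\<Prod>i\<in>I. indicator (A i) (x i) :: ennreal)"
proof (cases "\<forall>i\<in>I. x i \<in> A i")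
  case True
  then show ?thesis using assms by (auto simp: PiE_def indicator_def)
next
  case False
  then obtain i where i: "i \<in> I" "x i \<notin> A i" by auto
  then have "(\<Prod>i\<in>I. indicator (A i) (x i) :: ennreal) = 0"
    using assms(2) by (intro prod_zero) (auto intro!: bexI[of _ i])
  moreover have "x \<notin> Pi\<^sub>E I A" using i by auto
  ultimately show ?thesis by simp
qed

lemma PiM_density:
  fixes M :: "'i \<Rightarrow> 'a measure"
  assumes fin: "finite I"
    and sf: "\<And>i. sigma_finite_measure (M i)" "\<And>i. sigma_finite_measure (density (M i) (f i))"
    and f[measurable]: "\<And>i. f i \<in> borel_measurable (M i)"
  shows "PiM I (\<lambda>i. density (M i) (f i)) = density (PiM I M) (\<lambda>x. \<Prod>i\<in>I. f i (x i))"
proof -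
  interpret D: product_sigma_finite "\<lambda>i. density (M i) (f i)"
    using sf by (simp add: product_sigma_finite_def)
  interpret M: product_sigma_finite M
    using sf by (simp add: product_sigma_finite_def)
  have [measurable]: "(\<lambda>x. \<Prod>i\<in>I. f i (x i)) \<in> borel_measurable (PiM I M)"
    by measurable
  show ?thesis
  proof (rule D.PiM_eqI[symmetric, OF fin])
    show "sets (density (Pi\<^sub>M I M) (\<lambda>x. \<Prod>i\<in>I. f i (x i))) = sets (Pi\<^sub>M I (\<lambda>i. density (M i) (f i)))"
      by (simp cong: sets_PiM_cong)
  next
    fix A assume "\<And>i. i \<in> I \<Longrightarrow> A i \<in> sets (density (M i) (f i))"
    then have A[measurable]: "\<And>i. i \<in> I \<Longrightarrow> A i \<in> sets (M i)" by simp
    then have [measurable]: "Pi\<^sub>E I A \<in> sets (PiM I M)"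
      using fin by (intro sets_PiM_I_finite) auto
    have "emeasure (density (Pi\<^sub>M I M) (\<lambda>x. \<Prod>i\<in>I. f i (x i))) (Pi\<^sub>E I A)
        = (\<integral>\<^sup>+x. (\<Prod>i\<in>I. f i (x i)) * indicator (Pi\<^sub>E I A) x \<partial>PiM I M)"
      by (simp add: emeasure_density)
    also have "\<dots> = (\<integral>\<^sup>+x. (\<Prod>i\<in>I. f i (x i) * indicator (A i) (x i)) \<partial>PiM I M)"
    proof (intro nn_integral_cong)
      fix x assume "x \<in> space (PiM I M)"
      then have "x \<in> extensional I" by (simp add: space_PiM PiE_def)
      then show "(\<Prod>i\<in>I. f i (x i)) * indicator (Pi\<^sub>E I A) x
          = (\<Prod>i\<in>I. f i (x i) * indicator (A i) (x i))"
        by (simp add: indicator_PiE_eq_prod fin prod.distrib)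
    qed
    also have "\<dots> = (\<Prod>i\<in>I. \<integral>\<^sup>+y. f i y * indicator (A i) y \<partial>M i)"
      by (rule M.product_nn_integral_prod[OF fin]) measurable
    also have "\<dots> = (\<Prod>i\<in>I. emeasure (density (M i) (f i)) (A i))"
      by (intro prod.cong refl) (simp add: emeasure_density)
    finally show "emeasure (density (Pi\<^sub>M I M) (\<lambda>x. \<Prod>i\<in>I. f i (x i))) (Pi\<^sub>E I A)
        = (\<Prod>i\<in>I. emeasure (density (M i) (f i)) (A i))" .
  qed
qed

lemma nn_integral_eq_1_if_prob_space_density:
  assumes "prob_space (density M f)" "f \<in> borel_measurable M"
  shows "(\<integral>\<^sup>+x. f x \<partial>M) = 1"
proof -
  have "(\<integral>\<^sup>+x. f x \<partial>M) = emeasure (density M f) (space M)"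
    using assms(2) by (auto simp: emeasure_density intro!: nn_integral_cong)
  also have "\<dots> = 1"
    using prob_space.emeasure_space_1[OF assms(1)] by simp
  finally show ?thesis .
qed

lemma prob_space_std_gauss_shift: "prob_space (std_gauss_shift t)"
  unfolding std_gauss_shift_def by (rule prob_space_normal_density) simp

lemma sets_std_gauss_shift [simp, measurable_cong]: "sets (std_gauss_shift t) = sets borel"
  unfolding std_gauss_shift_def by simp

lemma sets_coord_space [measurable_cong]:
  "sets coord_space = sets (count_space UNIV \<Otimes>\<^sub>M (\<Pi>\<^sub>M j\<in>(UNIV::nat set). (borel :: real measure)))"
  unfolding coord_space_def by simp

lemma measurable_count_Pair:
  "(\<lambda>z. (k, z)) \<in> measurable (\<Pi>\<^sub>M j\<in>{..<k}. std_gauss_shift t) coord_space"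
proof -
  have "(\<lambda>z j. z j) \<in> measurable (\<Pi>\<^sub>M j\<in>{..<k}. std_gauss_shift t) (\<Pi>\<^sub>M j\<in>(UNIV::nat set). borel)"
  proof (rule measurable_PiM_single')
    fix j :: nat
    show "(\<lambda>z. z j) \<in> borel_measurable (\<Pi>\<^sub>M j\<in>{..<k}. std_gauss_shift t)"
    proof (cases "j < k")
      case True
      then show ?thesis
        using measurable_component_singleton[of j "{..<k}" "\<lambda>_. std_gauss_shift t"]
        by (simp only: measurable_cong_sets[OF refl sets_std_gauss_shift]) simp
    next
      case False
      then have "z j = undefined" if "z \<in> space (\<Pi>\<^sub>M j\<in>{..<k}. std_gauss_shift t)" for z
        using that by (auto simp: space_PiM PiE_def extensional_def)
      then show ?thesis
        by (subst measurable_cong[where g="\<lambda>_. undefined"]) auto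
    qed
  qed auto
  then show ?thesis
    unfolding coord_space_def by (intro measurable_Pair measurable_const) simp_all
qed

definition gauss_sample :: "real \<Rightarrow> nat \<Rightarrow> (nat \<times> (nat \<Rightarrow> real)) measure" where
  "gauss_sample t k = distr (\<Pi>\<^sub>M j\<in>{..<k}. std_gauss_shift t) coord_space (\<lambda>z. (k, z))"

lemma prob_space_gauss_sample: "prob_space (gauss_sample t k)"
  unfolding gauss_sample_def
  by (intro prob_space.prob_space_distr prob_space_PiM prob_space_std_gauss_shift
      measurable_count_Pair)

lemma sets_gauss_sample [simp, measurable_cong]: "sets (gauss_sample t k) = sets coord_space"
  unfolding gauss_sample_def by simp

lemma measurable_gauss_sample:
  "gauss_sample t \<in> measurable (measure_pmf p) (subprob_algebra coord_space)"
proof -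
  have "gauss_sample t \<in> measurable (count_space UNIV) (subprob_algebra coord_space)"
    by (simp add: space_subprob_algebra prob_space_imp_subprob_space prob_space_gauss_sample)
  then show ?thesis
    by (simp only: measurable_cong_sets[OF sets_measure_pmf_count_space refl])
qed

lemma coord_obs_eq_bind: "coord_obs lam t = measure_pmf (poisson_pmf lam) \<bind> gauss_sample t"
  unfolding coord_obs_def gauss_sample_def ..

lemma prob_space_coord_obs: "0 < lam \<Longrightarrow> prob_space (coord_obs lam t)"
  unfolding coord_obs_eq_bind
  by (intro prob_space.prob_space_bind[OF prob_space_measure_pmf _ measurable_gauss_sample]
      AE_I2 prob_space_gauss_sample)

lemma sets_coord_obs [simp, measurable_cong]: "sets (coord_obs lam t) = sets coord_space"
  unfolding coord_obs_eq_bind by (rule sets_bind) simp_all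

lemma sets_obs [simp, measurable_cong]: "sets (obs lam \<theta>) = sets (obs_space :: ('n::finite \<Rightarrow> _) measure)"
  unfolding obs_def obs_space_def by (rule sets_PiM_cong) simp_all

lemma prob_space_obs: "0 < lam \<Longrightarrow> prob_space (obs lam \<theta>)"
  unfolding obs_def by (intro prob_space_PiM prob_space_coord_obs)

section \<open>Likelihood ratios\<close>

definition coord_lr :: "real \<Rightarrow> nat \<times> (nat \<Rightarrow> real) \<Rightarrow> real" where
  "coord_lr t y = (\<Prod>j<fst y. exp (t * snd y j - t\<^sup>2 / 2))"

lemma coord_lr_nonneg: "0 \<le> coord_lr t y"
  unfolding coord_lr_def by (intro prod_nonneg) simp

lemma borel_measurable_coord_lr [measurable]: "coord_lr t \<in> borel_measurable coord_space"
proof -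
  have "coord_lr t \<in> borel_measurable (count_space UNIV \<Otimes>\<^sub>M (\<Pi>\<^sub>M j\<in>(UNIV::nat set). borel))"
    by (rule measurable_pair_measure_countable1) (simp_all add: coord_lr_def)
  then show ?thesis
    by (simp only: measurable_cong_sets[OF sets_coord_space refl])
qed

lemma normal_density_shift:
  "normal_density 0 1 x * exp (t * x - t\<^sup>2 / 2) = normal_density t 1 x"
proof -
  have "exp (- x\<^sup>2 / 2) * exp (t * x - t\<^sup>2 / 2) = exp (- (x - t)\<^sup>2 / 2)"
    by (simp add: mult_exp_exp power2_diff field_simps)
  then show ?thesis
    by (simp add: normal_density_def mult.assoc)
qed

lemma std_gauss_shift_density:
  "std_gauss_shift t = density (std_gauss_shift 0) (\<lambda>x. exp (t * x - t\<^sup>2 / 2))"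
proof -
  have "density (std_gauss_shift 0) (\<lambda>x. exp (t * x - t\<^sup>2 / 2))
      = density lborel (\<lambda>x. ennreal (normal_density 0 1 x) * exp (t * x - t\<^sup>2 / 2))"
    unfolding std_gauss_shift_def by (rule density_density_eq) measurable
  also have "\<dots> = std_gauss_shift t"
    unfolding std_gauss_shift_def
    by (intro density_cong) (auto simp: ennreal_mult[symmetric] normal_density_shift)
  finally show ?thesis ..
qed

lemma gauss_sample_density: "gauss_sample t k = density (gauss_sample 0 k) (coord_lr t)"
proof -
  let ?G = "\<lambda>t. \<Pi>\<^sub>M j\<in>{..<k}. std_gauss_shift t"
  have "?G t = (\<Pi>\<^sub>M j\<in>{..<k}. density (std_gauss_shift 0) (\<lambda>x. exp (t * x - t\<^sup>2 / 2)))"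
    by (subst std_gauss_shift_density) rule
  also have "\<dots> = density (?G 0) (\<lambda>z. \<Prod>j<k. ennreal (exp (t * z j - t\<^sup>2 / 2)))"
    by (intro PiM_density prob_space_imp_sigma_finite prob_space_std_gauss_shift)
      (simp_all add: std_gauss_shift_density[symmetric] prob_space_std_gauss_shift)
  also have "\<dots> = density (?G 0) (\<lambda>z. coord_lr t (k, z))"
    by (simp add: coord_lr_def prod_ennreal)
  finally have "gauss_sample t k = distr (density (?G 0) (\<lambda>z. coord_lr t (k, z))) coord_space (\<lambda>z. (k, z))"
    unfolding gauss_sample_def by simp
  also have "\<dots> = density (gauss_sample 0 k) (coord_lr t)"
    unfolding gauss_sample_def
    by (rule density_distr[symmetric]) (simp_all add: measurable_count_Pair)
  finally show ?thesis .
qed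

lemma coord_obs_density:
  assumes "0 < lam"
  shows "coord_obs lam t = density (coord_obs lam 0) (coord_lr t)"
proof (rule measure_eqI)
  fix A assume "A \<in> sets (coord_obs lam t)"
  then have A[measurable]: "A \<in> sets coord_space" by simp
  have "emeasure (coord_obs lam t) A
      = (\<integral>\<^sup>+k. emeasure (gauss_sample t k) A \<partial>measure_pmf (poisson_pmf lam))"
    unfolding coord_obs_eq_bind by (rule emeasure_bind[OF _ measurable_gauss_sample A]) simp
  also have "\<dots> = (\<integral>\<^sup>+k. (\<integral>\<^sup>+y. ennreal (coord_lr t y) * indicator A y \<partial>gauss_sample 0 k) \<partial>poisson_pmf lam)"
    by (intro nn_integral_cong) (simp add: gauss_sample_density[of t] emeasure_density)
  also have "\<dots> = (\<integral>\<^sup>+y. ennreal (coord_lr t y) * indicator A y \<partial>coord_obs lam 0)"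
    unfolding coord_obs_eq_bind
    by (rule nn_integral_bind[symmetric, OF _ measurable_gauss_sample]) measurable
  also have "\<dots> = emeasure (density (coord_obs lam 0) (coord_lr t)) A"
    by (simp add: emeasure_density)
  finally show "emeasure (coord_obs lam t) A = emeasure (density (coord_obs lam 0) (coord_lr t)) A" .
qed simp

definition obs_lr :: "real ^ 'n::finite \<Rightarrow> ('n \<Rightarrow> nat \<times> (nat \<Rightarrow> real)) \<Rightarrow> real" where
  "obs_lr \<theta> y = (\<Prod>i\<in>UNIV. coord_lr (\<theta> $ i) (y i))"

lemma obs_lr_nonneg: "0 \<le> obs_lr \<theta> y"
  unfolding obs_lr_def by (intro prod_nonneg) (simp add: coord_lr_nonneg)

lemma borel_measurable_obs_lr [measurable]: "obs_lr \<theta> \<in> borel_measurable (obs lam \<theta>')"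
  unfolding obs_lr_def obs_def by measurable

lemma obs_density:
  fixes \<theta> :: "real ^ 'n::finite"
  assumes lam: "0 < lam"
  shows "obs lam \<theta> = density (obs lam 0) (obs_lr \<theta>)"
proof -
  have "obs lam \<theta> = (\<Pi>\<^sub>M i\<in>UNIV. density (coord_obs lam 0) (coord_lr (\<theta> $ i)))"
    unfolding obs_def by (subst coord_obs_density[OF lam]) rule
  also have "\<dots> = density (obs lam 0) (\<lambda>y. \<Prod>i\<in>UNIV. ennreal (coord_lr (\<theta> $ i) (y i)))"
    unfolding obs_def zero_index
    by (intro PiM_density prob_space_imp_sigma_finite prob_space_coord_obs lam)
      (simp_all add: coord_obs_density[OF lam, symmetric] prob_space_coord_obs[OF lam])
  also have "\<dots> = density (obs lam 0) (obs_lr \<theta>)"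
    by (simp add: obs_lr_def prod_ennreal coord_lr_nonneg)
  finally show ?thesis .
qed

lemma nn_integral_obs_lr: "0 < lam \<Longrightarrow> (\<integral>\<^sup>+y. obs_lr \<theta> y \<partial>obs lam 0) = 1"
  by (intro nn_integral_eq_1_if_prob_space_density)
    (simp_all add: obs_density[symmetric] prob_space_obs)

section \<open>Second moments of likelihood ratios\<close>

lemma coord_lr_mult: "coord_lr a y * coord_lr b y = exp (real (fst y) * (a * b)) * coord_lr (a + b) y"
proof -
  have "coord_lr a y * coord_lr b y = (\<Prod>j<fst y. exp (a * snd y j - a\<^sup>2 / 2) * exp (b * snd y j - b\<^sup>2 / 2))"
    by (simp add: coord_lr_def prod.distrib)
  also have "\<dots> = (\<Prod>j<fst y. exp (a * b) * exp ((a + b) * snd y j - (a + b)\<^sup>2 / 2))"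
    by (intro prod.cong refl) (simp add: mult_exp_exp power2_eq_square algebra_simps)
  also have "\<dots> = exp (real (fst y) * (a * b)) * coord_lr (a + b) y"
    by (simp add: coord_lr_def prod.distrib exp_of_nat_mult)
  finally show ?thesis .
qed

lemma nn_integral_poisson_exp:
  assumes lam: "0 < lam"
  shows "(\<integral>\<^sup>+k. exp (real k * c) \<partial>poisson_pmf lam) = exp (lam * (exp c - 1))"
proof -
  have pmf_exp: "pmf (poisson_pmf lam) k * exp (real k * c) = exp (- lam) * ((lam * exp c) ^ k / fact k)"
    for k
  proof -
    have "exp (real k * c) = exp c ^ k" by (rule exp_of_nat_mult)
    then show ?thesis by (simp add: pmf_poisson[OF lam] power_mult_distrib field_simps)
  qed
  have sums: "(\<lambda>k. exp (- lam) * ((lam * exp c) ^ k / fact k)) sums (exp (- lam) * exp (lam * exp c))"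
    using exp_converges[of "lam * exp c"] by (intro sums_mult) (simp add: divide_inverse mult.commute)
  have "(\<integral>\<^sup>+k. exp (real k * c) \<partial>poisson_pmf lam)
      = (\<Sum>k. ennreal (exp (- lam) * ((lam * exp c) ^ k / fact k)))"
    by (simp add: nn_integral_measure_pmf nn_integral_count_space_nat ennreal_mult'[symmetric] pmf_exp)
  also have "\<dots> = ennreal (\<Sum>k. exp (- lam) * ((lam * exp c) ^ k / fact k))"
    using lam by (intro suminf_ennreal2 sums_summable[OF sums]) simp
  also have "(\<Sum>k. exp (- lam) * ((lam * exp c) ^ k / fact k)) = exp (- lam) * exp (lam * exp c)"
    by (rule sums_unique[OF sums, symmetric])
  also have "exp (- lam) * exp (lam * exp c) = exp (lam * (exp c - 1))"
    by (simp add: mult_exp_exp algebra_simps)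
  finally show ?thesis .
qed

lemma AE_gauss_sample_count: "AE y in gauss_sample t k. fst y = k"
  unfolding gauss_sample_def
  by (subst AE_distr_iff) (simp_all add: measurable_count_Pair)

lemma nn_integral_coord_lr_mult:
  assumes lam: "0 < lam"
  shows "(\<integral>\<^sup>+y. coord_lr a y * coord_lr b y \<partial>coord_obs lam 0) = exp (lam * (exp (a * b) - 1))"
proof -
  have "(\<integral>\<^sup>+y. coord_lr a y * coord_lr b y \<partial>gauss_sample 0 k) = exp (k * (a * b))" for k
  proof -
    have "(\<integral>\<^sup>+y. coord_lr a y * coord_lr b y \<partial>gauss_sample 0 k)
        = (\<integral>\<^sup>+y. exp (k * (a * b)) * ennreal (coord_lr (a + b) y) \<partial>gauss_sample 0 k)"
    proof (rule nn_integral_cong_AE)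
      show "AE y in gauss_sample 0 k. ennreal (coord_lr a y * coord_lr b y)
          = exp (k * (a * b)) * ennreal (coord_lr (a + b) y)"
        using AE_gauss_sample_count[where t=0 and k=k]
        by eventually_elim (simp add: coord_lr_mult ennreal_mult coord_lr_nonneg)
    qed
    also have "\<dots> = exp (k * (a * b)) * (\<integral>\<^sup>+y. coord_lr (a + b) y \<partial>gauss_sample 0 k)"
      by (rule nn_integral_cmult) measurable
    also have "(\<integral>\<^sup>+y. coord_lr (a + b) y \<partial>gauss_sample 0 k) = 1"
      by (intro nn_integral_eq_1_if_prob_space_density)
        (simp_all add: gauss_sample_density[symmetric] prob_space_gauss_sample)
    finally show ?thesis by simp
  qed
  then have "(\<integral>\<^sup>+y. coord_lr a y * coord_lr b y \<partial>coord_obs lam 0)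
      = (\<integral>\<^sup>+k. exp (real k * (a * b)) \<partial>poisson_pmf lam)"
    unfolding coord_obs_eq_bind
    by (subst nn_integral_bind[OF _ measurable_gauss_sample]) simp_all
  also have "\<dots> = exp (lam * (exp (a * b) - 1))"
    by (rule nn_integral_poisson_exp[OF lam])
  finally show ?thesis .
qed

lemma nn_integral_obs_lr_mult:
  fixes \<theta> \<theta>' :: "real ^ 'n::finite"
  assumes lam: "0 < lam"
  shows "(\<integral>\<^sup>+y. obs_lr \<theta> y * obs_lr \<theta>' y \<partial>obs lam 0)
    = exp (lam * (\<Sum>i\<in>UNIV. exp (\<theta> $ i * \<theta>' $ i) - 1))"
proof -
  interpret product_sigma_finite "\<lambda>i::'n. coord_obs lam 0"
    unfolding product_sigma_finite_def
    by (intro allI prob_space_imp_sigma_finite prob_space_coord_obs lam)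
  have "(\<integral>\<^sup>+y. obs_lr \<theta> y * obs_lr \<theta>' y \<partial>obs lam 0)
      = (\<integral>\<^sup>+y. (\<Prod>i\<in>UNIV. ennreal (coord_lr (\<theta> $ i) (y i) * coord_lr (\<theta>' $ i) (y i)))
          \<partial>(\<Pi>\<^sub>M i\<in>UNIV. coord_obs lam 0))"
    unfolding obs_def obs_lr_def zero_index
    by (intro nn_integral_cong) (simp add: prod_ennreal coord_lr_nonneg prod.distrib)
  also have "\<dots> = (\<Prod>i\<in>UNIV. \<integral>\<^sup>+x. coord_lr (\<theta> $ i) x * coord_lr (\<theta>' $ i) x \<partial>coord_obs lam 0)"
    by (rule product_nn_integral_prod) simp_all
  also have "\<dots> = (\<Prod>i\<in>UNIV. ennreal (exp (lam * (exp (\<theta> $ i * \<theta>' $ i) - 1))))"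
    by (simp add: nn_integral_coord_lr_mult[OF lam])
  also have "\<dots> = exp (lam * (\<Sum>i\<in>UNIV. exp (\<theta> $ i * \<theta>' $ i) - 1))"
    by (simp add: prod_ennreal exp_sum sum_distrib_left)
  finally show ?thesis .
qed

lemma nn_integral_mixture_lr_square:
  fixes \<theta> :: "'f \<Rightarrow> real ^ 'n::finite"
  assumes lam: "0 < lam" and F: "finite F"
  shows "(\<integral>\<^sup>+y. ((\<Sum>f\<in>F. obs_lr (\<theta> f) y) / card F)\<^sup>2 \<partial>obs lam 0)
    = (\<Sum>f\<in>F. \<Sum>g\<in>F. exp (lam * (\<Sum>i\<in>UNIV. exp (\<theta> f $ i * \<theta> g $ i) - 1))) / (card F)\<^sup>2"
proof -
  let ?w = "ennreal (1 / (card F)\<^sup>2)"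
  have "ennreal (((\<Sum>f\<in>F. obs_lr (\<theta> f) y) / card F)\<^sup>2)
      = (\<Sum>f\<in>F. \<Sum>g\<in>F. ?w * ennreal (obs_lr (\<theta> f) y * obs_lr (\<theta> g) y))" for y
  proof -
    have "((\<Sum>f\<in>F. obs_lr (\<theta> f) y) / card F)\<^sup>2
        = (\<Sum>f\<in>F. \<Sum>g\<in>F. 1 / (card F)\<^sup>2 * (obs_lr (\<theta> f) y * obs_lr (\<theta> g) y))"
      by (simp add: power2_eq_square sum_product sum_divide_distrib)
    then show ?thesis
      by (simp add: sum_nonneg obs_lr_nonneg ennreal_mult[symmetric] flip: sum_ennreal)
  qed
  then have "(\<integral>\<^sup>+y. ((\<Sum>f\<in>F. obs_lr (\<theta> f) y) / card F)\<^sup>2 \<partial>obs lam 0)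
      = (\<Sum>f\<in>F. \<Sum>g\<in>F. ?w * (\<integral>\<^sup>+y. obs_lr (\<theta> f) y * obs_lr (\<theta> g) y \<partial>obs lam 0))"
    by (simp add: nn_integral_sum nn_integral_cmult)
  also have "\<dots> = (\<Sum>f\<in>F. \<Sum>g\<in>F. ?w * exp (lam * (\<Sum>i\<in>UNIV. exp (\<theta> f $ i * \<theta> g $ i) - 1)))"
    by (simp add: nn_integral_obs_lr_mult[OF lam])
  also have "\<dots> = (\<Sum>f\<in>F. \<Sum>g\<in>F. exp (lam * (\<Sum>i\<in>UNIV. exp (\<theta> f $ i * \<theta> g $ i) - 1))) / (card F)\<^sup>2"
    by (simp add: sum_nonneg ennreal_mult[symmetric] sum_divide_distrib flip: sum_ennreal)
  finally show ?thesis .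
qed

section \<open>Lower bounds on the risk from a second-moment bound\<close>

lemma (in prob_space) integral_mult_le_second_moment:
  fixes \<psi> L :: "'a \<Rightarrow> real"
  assumes [measurable]: "\<psi> \<in> borel_measurable M" and \<psi>: "\<And>x. 0 \<le> \<psi> x" "\<And>x. \<psi> x \<le> 1"
    and L: "integrable M L" "integrable M (\<lambda>x. (L x)\<^sup>2)" "(\<integral>x. L x \<partial>M) = 1"
  shows "(\<integral>x. \<psi> x * L x \<partial>M) \<le> (\<integral>x. \<psi> x \<partial>M) + (\<integral>x. (L x)\<^sup>2 \<partial>M) - 3/4"
proof -
  have pointwise: "\<psi> x * L x \<le> \<psi> x + ((L x)\<^sup>2 - 2 * L x + 5/4)" for x
  proof -
    have "\<psi> x * (L x - 1) \<le> \<psi> x * \<bar>L x - 1\<bar>"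
      using \<psi>[of x] by (intro mult_left_mono) auto
    also have "\<dots> \<le> \<bar>L x - 1\<bar>"
      using \<psi>[of x] by (intro mult_left_le_one_le) auto
    also have "\<bar>L x - 1\<bar> \<le> (L x - 1)\<^sup>2 + 1/4"
      using zero_le_power2[of "\<bar>L x - 1\<bar> - 1/2"] by (simp add: power2_eq_square algebra_simps)
    finally show ?thesis by (simp add: power2_eq_square algebra_simps)
  qed
  have [measurable]: "L \<in> borel_measurable M"
    using L(1) by (rule borel_measurable_integrable)
  have int_\<psi>: "integrable M \<psi>"
    using \<psi> by (intro integrable_const_bound[where B=1]) auto
  have "integrable M (\<lambda>x. \<psi> x * L x)"
    using \<psi> by (intro Bochner_Integration.integrable_bound[OF L(1)] AE_I2)
      (auto simp: abs_mult mult_left_le_one_le)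
  then have "(\<integral>x. \<psi> x * L x \<partial>M) \<le> (\<integral>x. \<psi> x + ((L x)\<^sup>2 - 2 * L x + 5/4) \<partial>M)"
    using L int_\<psi> pointwise by (intro integral_mono) auto
  also have "\<dots> = (\<integral>x. \<psi> x \<partial>M) + (\<integral>x. (L x)\<^sup>2 \<partial>M) - 3/4"
    using L int_\<psi> by (simp add: prob_space)
  finally show ?thesis .
qed

lemma is_testD:
  assumes "is_test \<psi>"
  shows "\<psi> \<in> borel_measurable (obs lam \<theta>)" "0 \<le> \<psi> y" "\<psi> y \<le> 1"
  using assms unfolding is_test_def by (auto simp: measurable_cong_sets[OF sets_obs refl] dest: spec[of _ y])

lemma integral_obs_eq_lr:
  assumes "0 < lam" "\<psi> \<in> borel_measurable obs_space"
  shows "(\<integral>y. \<psi> y \<partial>obs lam \<theta>) = (\<integral>y. obs_lr \<theta> y * \<psi> y \<partial>obs lam 0)"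
  using assms by (subst obs_density) (simp_all add: integral_density obs_lr_nonneg)

lemma average_test_le:
  fixes \<theta> :: "'f \<Rightarrow> real ^ 'n::finite"
  assumes lam: "0 < lam" and F: "finite F" "F \<noteq> {}" and \<psi>: "is_test \<psi>"
    and chi: "(\<integral>\<^sup>+y. ((\<Sum>f\<in>F. obs_lr (\<theta> f) y) / card F)\<^sup>2 \<partial>obs lam 0) \<le> ennreal (5/4)"
  shows "(\<Sum>f\<in>F. \<integral>y. \<psi> y \<partial>obs lam (\<theta> f)) / card F \<le> (\<integral>y. \<psi> y \<partial>obs lam 0) + 1/2"
proof -
  let ?P = "obs lam (0 :: real ^ 'n)"
  interpret P: prob_space ?P by (rule prob_space_obs[OF lam])
  define L where "L y = (\<Sum>f\<in>F. obs_lr (\<theta> f) y) / card F" for y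
  have [measurable]: "L \<in> borel_measurable ?P"
    unfolding L_def by simp
  have int_lr: "integrable ?P (obs_lr \<theta>')" and integral_lr: "(\<integral>y. obs_lr \<theta>' y \<partial>?P) = 1"
    for \<theta>' :: "real ^ 'n"
    using nn_integral_obs_lr[OF lam, of \<theta>']
    by (auto simp: obs_lr_nonneg integrableI_nn_integral_finite integral_eq_nn_integral)
  have int_L: "integrable ?P L" and integral_L: "(\<integral>y. L y \<partial>?P) = 1"
    unfolding L_def using F int_lr by (simp_all add: integral_lr)
  have L2: "(\<integral>\<^sup>+y. (L y)\<^sup>2 \<partial>?P) \<le> ennreal (5/4)"
    using chi by (simp add: L_def)
  then have "(\<integral>\<^sup>+y. (L y)\<^sup>2 \<partial>?P) < \<infinity>"
    by (rule le_less_trans) simp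
  then have int_L2: "integrable ?P (\<lambda>y. (L y)\<^sup>2)"
    by (intro integrableI_bounded) simp_all
  have integral_L2: "(\<integral>y. (L y)\<^sup>2 \<partial>?P) \<le> 5/4"
    using L2 by (subst (asm) nn_integral_eq_integral[OF int_L2]) (simp_all add: ennreal_le_iff)
  have \<psi>_meas: "\<psi> \<in> borel_measurable obs_space"
    using \<psi> by (simp add: is_test_def)
  have [measurable]: "\<psi> \<in> borel_measurable ?P"
    using is_testD(1)[OF \<psi>] .
  have int_\<psi>_lr: "integrable ?P (\<lambda>y. \<psi> y * obs_lr \<theta>' y)" for \<theta>'
    using is_testD(2,3)[OF \<psi>]
    by (intro Bochner_Integration.integrable_bound[OF int_lr[of \<theta>']] AE_I2)
      (auto simp: abs_mult obs_lr_nonneg mult_left_le_one_le)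
  have "(\<Sum>f\<in>F. \<integral>y. \<psi> y \<partial>obs lam (\<theta> f)) / card F
      = (\<integral>y. (\<Sum>f\<in>F. \<psi> y * obs_lr (\<theta> f) y) \<partial>?P) / card F"
    using int_\<psi>_lr by (simp add: integral_sum integral_obs_eq_lr[OF lam \<psi>_meas] mult.commute)
  also have "\<dots> = (\<integral>y. \<psi> y * L y \<partial>?P)"
    by (simp add: L_def sum_distrib_left)
  also have "\<dots> \<le> (\<integral>y. \<psi> y \<partial>?P) + (\<integral>y. (L y)\<^sup>2 \<partial>?P) - 3/4"
    using is_testD[OF \<psi>] int_L int_L2 integral_L by (intro P.integral_mult_le_second_moment)
  also have "\<dots> \<le> (\<integral>y. \<psi> y \<partial>?P) + 1/2"
    using integral_L2 by simp
  finally show ?thesis .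
qed

lemma integral_test_bounds:
  assumes lam: "0 < lam" and \<psi>: "is_test \<psi>"
  shows "0 \<le> (\<integral>y. \<psi> y \<partial>obs lam \<theta>)" "(\<integral>y. \<psi> y \<partial>obs lam \<theta>) \<le> 1"
    and "(\<integral>y. 1 - \<psi> y \<partial>obs lam \<theta>) = 1 - (\<integral>y. \<psi> y \<partial>obs lam \<theta>)"
proof -
  interpret prob_space "obs lam \<theta>" by (rule prob_space_obs[OF lam])
  note bounds = is_testD(2,3)[OF \<psi>]
  have "integrable (obs lam \<theta>) \<psi>"
    using is_testD(1)[OF \<psi>] bounds by (intro integrable_const_bound[where B=1]) auto
  then show complement: "(\<integral>y. 1 - \<psi> y \<partial>obs lam \<theta>) = 1 - (\<integral>y. \<psi> y \<partial>obs lam \<theta>)"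
    by (simp add: prob_space)
  show "0 \<le> (\<integral>y. \<psi> y \<partial>obs lam \<theta>)"
    using bounds by (intro integral_nonneg_AE) auto
  have "0 \<le> (\<integral>y. 1 - \<psi> y \<partial>obs lam \<theta>)"
    using bounds by (intro integral_nonneg_AE) auto
  then show "(\<integral>y. \<psi> y \<partial>obs lam \<theta>) \<le> 1"
    using complement by simp
qed

lemma minimax_risk_ge_half:
  fixes \<theta> :: "'f \<Rightarrow> real ^ 'n::finite"
  assumes lam: "0 < lam" and "0 \<in> C1" and F: "finite F" "F \<noteq> {}"
    and alternatives: "\<theta> ` F \<subseteq> C2 - enlarge C1 \<epsilon>"
    and chi: "(\<integral>\<^sup>+y. ((\<Sum>f\<in>F. obs_lr (\<theta> f) y) / card F)\<^sup>2 \<partial>obs lam 0) \<le> ennreal (5/4)"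
  shows "1/2 \<le> minimax_risk lam C1 C2 \<epsilon>"
  unfolding minimax_risk_def
proof (rule cINF_greatest)
  show "{\<psi>. is_test \<psi>} \<noteq> {}"
    using is_test_def[of "\<lambda>_. 0"] by auto
next
  fix \<psi> :: "('n \<Rightarrow> nat \<times> (nat \<Rightarrow> real)) \<Rightarrow> real"
  assume "\<psi> \<in> {\<psi>. is_test \<psi>}"
  then have \<psi>: "is_test \<psi>" by simp
  note bounds = integral_test_bounds[OF lam \<psi>]
  let ?type2 = "SUP \<theta>'\<in>C2 - enlarge C1 \<epsilon>. \<integral>y. 1 - \<psi> y \<partial>obs lam \<theta>'"
  have "(\<integral>y. \<psi> y \<partial>obs lam 0) \<le> (SUP \<theta>'\<in>C1. \<integral>y. \<psi> y \<partial>obs lam \<theta>')"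
    using bounds(2) by (intro cSUP_upper[OF \<open>0 \<in> C1\<close>] bdd_aboveI2) auto
  moreover have "1 - (\<integral>y. \<psi> y \<partial>obs lam (\<theta> f)) \<le> ?type2" if "f \<in> F" for f
    using alternatives that bounds
    by (intro cSUP_upper2[where x="\<theta> f"] bdd_aboveI2[where M=1]) auto
  then have "(\<Sum>f\<in>F. 1 - (\<integral>y. \<psi> y \<partial>obs lam (\<theta> f))) \<le> card F * ?type2"
    by (rule sum_bounded_above)
  then have "(\<Sum>f\<in>F. 1 - (\<integral>y. \<psi> y \<partial>obs lam (\<theta> f))) / card F \<le> ?type2"
    using F by (simp add: pos_divide_le_eq card_gt_0_iff mult.commute)
  moreover have "(\<Sum>f\<in>F. \<integral>y. \<psi> y \<partial>obs lam (\<theta> f)) / card F \<le> (\<integral>y. \<psi> y \<partial>obs lam 0) + 1/2"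
    by (rule average_test_le[OF lam F \<psi> chi])
  ultimately show "1/2 \<le> test_risk lam \<psi> C1 C2 \<epsilon>"
    using F by (simp add: test_risk_def sum_subtractf diff_divide_distrib)
qed

section \<open>Sparse spike priors\<close>

definition spike :: "real \<Rightarrow> 'n set \<Rightarrow> real ^ 'n::finite" where
  "spike a S = (\<chi> i. if i \<in> S then a else 0)"

lemma norm_spike: "norm (spike a S) = \<bar>a\<bar> * sqrt (card S)"
proof -
  have "(\<Sum>i\<in>UNIV. (norm (spike a S $ i))\<^sup>2) = (\<Sum>i\<in>S. a\<^sup>2)"
    by (rule sum.mono_neutral_cong_right) (auto simp: spike_def)
  then show ?thesis
    by (simp add: norm_vec_def L2_set_def real_sqrt_mult)
qed

lemma sum_exp_spike_mult:
  "(\<Sum>i\<in>UNIV. exp (spike a S $ i * spike a S' $ i) - 1) = card (S \<inter> S') * (exp (a\<^sup>2) - 1)"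
proof -
  have "(\<Sum>i\<in>UNIV. exp (spike a S $ i * spike a S' $ i) - 1) = (\<Sum>i\<in>S \<inter> S'. exp (a\<^sup>2) - 1)"
    by (rule sum.mono_neutral_cong_right) (auto simp: spike_def power2_eq_square)
  then show ?thesis by simp
qed

definition block_support :: "(nat \<times> nat \<Rightarrow> 'a) \<Rightarrow> nat \<Rightarrow> (nat \<Rightarrow> nat) \<Rightarrow> 'a set" where
  "block_support e s r = (\<lambda>j. e (j, r j)) ` {..<s}"

lemma card_block_support_inter:
  assumes e: "inj_on e ({..<s} \<times> B)" and r: "r \<in> {..<s} \<rightarrow>\<^sub>E B" and r': "r' \<in> {..<s} \<rightarrow>\<^sub>E B"
  shows "card (block_support e s r \<inter> block_support e s r') = card {j\<in>{..<s}. r j = r' j}"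
proof -
  have "block_support e s r \<inter> block_support e s r' = (\<lambda>j. e (j, r j)) ` {j\<in>{..<s}. r j = r' j}"
  proof
    show "block_support e s r \<inter> block_support e s r' \<subseteq> (\<lambda>j. e (j, r j)) ` {j\<in>{..<s}. r j = r' j}"
      using r r' by (auto simp: block_support_def dest: inj_onD[OF e])
    show "(\<lambda>j. e (j, r j)) ` {j\<in>{..<s}. r j = r' j} \<subseteq> block_support e s r \<inter> block_support e s r'"
      by (auto simp: block_support_def intro!: image_eqI)
  qed
  moreover have "inj_on (\<lambda>j. e (j, r j)) {j\<in>{..<s}. r j = r' j}"
    using r by (auto intro!: inj_onI dest: inj_onD[OF e])
  ultimately show ?thesis
    by (metis card_image)
qed

lemma sum_PiE_sum_PiE_power_card_eq:
  fixes x :: real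
  assumes "finite I" "finite B"
  shows "(\<Sum>r\<in>I \<rightarrow>\<^sub>E B. \<Sum>r'\<in>I \<rightarrow>\<^sub>E B. x ^ card {j\<in>I. r j = r' j})
    = (card B * (x + card B - 1)) ^ card I"
proof -
  have power_card: "x ^ card {j\<in>I. r j = r' j} = (\<Prod>j\<in>I. if r j = r' j then x else 1)" for r r'
    using assms(1) by (simp add: prod.If_cases Int_def)
  have row: "(\<Sum>v\<in>B. if u = v then x else 1) = x + card B - 1" if "u \<in> B" for u
  proof -
    have "(\<Sum>v\<in>B. if u = v then x else 1) = (\<Sum>v\<in>B. 1 + (if u = v then x - 1 else 0))"
      by (intro sum.cong) auto
    then show ?thesis
      using that assms(2) by (simp add: sum.distrib)
  qed
  have "(card B * (x + card B - 1)) ^ card I = (\<Prod>j\<in>I. \<Sum>u\<in>B. \<Sum>v\<in>B. if u = v then x else 1)"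
    by (simp add: row)
  also have "\<dots> = (\<Sum>r\<in>I \<rightarrow>\<^sub>E B. \<Prod>j\<in>I. \<Sum>v\<in>B. if r j = v then x else 1)"
    using assms by (rule prod_sum_PiE)
  also have "\<dots> = (\<Sum>r\<in>I \<rightarrow>\<^sub>E B. \<Sum>r'\<in>I \<rightarrow>\<^sub>E B. \<Prod>j\<in>I. if r j = r' j then x else 1)"
    using assms by (intro sum.cong refl prod_sum_PiE)
  finally show ?thesis
    by (simp add: power_card)
qed

lemma nn_integral_block_spike_mixture:
  fixes e :: "nat \<times> nat \<Rightarrow> 'n::finite"
  assumes lam: "0 < lam" and b: "0 < b" and e: "inj_on e ({..<s} \<times> {..<b})"
  shows "(\<integral>\<^sup>+y. ((\<Sum>r\<in>{..<s} \<rightarrow>\<^sub>E {..<b}. obs_lr (spike a (block_support e s r)) y)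
      / card ({..<s} \<rightarrow>\<^sub>E {..<b}))\<^sup>2 \<partial>obs lam 0)
    = (1 + (exp (lam * (exp (a\<^sup>2) - 1)) - 1) / b) ^ s"
proof -
  define F where "F = {..<s} \<rightarrow>\<^sub>E {..<b}"
  define \<theta> where "\<theta> r = spike a (block_support e s r)" for r
  define c where "c = lam * (exp (a\<^sup>2) - 1)"
  have card_F: "card F = b ^ s"
    by (simp add: F_def card_PiE)
  have "exp (lam * (\<Sum>i\<in>UNIV. exp (\<theta> r $ i * \<theta> r' $ i) - 1)) = exp c ^ card {j\<in>{..<s}. r j = r' j}"
    if "r \<in> F" "r' \<in> F" for r r'
    using that
    by (simp add: F_def \<theta>_def c_def sum_exp_spike_mult card_block_support_inter[OF e]
        flip: exp_of_nat_mult)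
  then have "(\<Sum>r\<in>F. \<Sum>r'\<in>F. exp (lam * (\<Sum>i\<in>UNIV. exp (\<theta> r $ i * \<theta> r' $ i) - 1))) / (card F)\<^sup>2
      = (\<Sum>r\<in>F. \<Sum>r'\<in>F. exp c ^ card {j\<in>{..<s}. r j = r' j}) / (b ^ s)\<^sup>2"
    by (simp add: card_F)
  also have "\<dots> = (b * (exp c + b - 1)) ^ s / (b ^ s)\<^sup>2"
    using sum_PiE_sum_PiE_power_card_eq[of "{..<s}" "{..<b}" "exp c"] by (simp add: F_def)
  also have "\<dots> = ((b * (exp c + b - 1)) / b\<^sup>2) ^ s"
    by (simp add: power_divide mult.commute flip: power_mult)
  also have "(b * (exp c + b - 1)) / b\<^sup>2 = 1 + (exp c - 1) / b"
    using b by (simp add: power2_eq_square field_simps)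
  finally have chi: "(\<Sum>r\<in>F. \<Sum>r'\<in>F. exp (lam * (\<Sum>i\<in>UNIV. exp (\<theta> r $ i * \<theta> r' $ i) - 1)))
      / (card F)\<^sup>2 = (1 + (exp c - 1) / b) ^ s" .
  have "finite F"
    by (simp add: F_def finite_PiE)
  from nn_integral_mixture_lr_square[OF lam this, of \<theta>] show ?thesis
    unfolding chi unfolding F_def \<theta>_def c_def .
qed

lemma block_spike_separated:
  assumes e: "inj_on e ({..<s} \<times> B)" and r: "r \<in> {..<s} \<rightarrow>\<^sub>E B"
    and a: "0 \<le> a" and separation: "\<epsilon>\<^sup>2 < s * a\<^sup>2"
  shows "spike a (block_support e s r) \<in> {\<theta>. \<forall>i. 0 \<le> \<theta> $ i} - enlarge {0} \<epsilon>"
proof -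
  have "card (block_support e s r) = s"
    using card_block_support_inter[OF e r r] by simp
  then have "norm (spike a (block_support e s r)) = sqrt (s * a\<^sup>2)"
    using a by (simp add: norm_spike real_sqrt_mult)
  moreover have "\<epsilon> < sqrt (s * a\<^sup>2)"
    using real_sqrt_less_mono[OF separation] by (simp add: abs_le_iff)
  ultimately show ?thesis
    using a by (auto simp: enlarge_def spike_def)
qed

section \<open>Choice of the prior parameters\<close>

lemma exp_mult_minus_one_le:
  fixes x y :: real
  assumes "0 \<le> x" "x \<le> 1"
  shows "exp (x * y) - 1 \<le> x * (exp y - 1)"
  using convex_onD[OF exp_convex, of x 0 y] assms by (simp add: algebra_simps)

lemma exp_seven_quarters_le: "exp (7/4 :: real) \<le> 645/100"
proof -
  have "exp (3/4 :: real) \<le> 1 + 3/4 + (3/4)\<^sup>2"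
    by (rule exp_bound) simp_all
  then have "exp 1 * exp (3/4 :: real) \<le> 272/100 * (1 + 3/4 + (3/4)\<^sup>2)"
    using e_less_272 by (intro mult_mono) simp_all
  then show ?thesis
    by (simp add: mult_exp_exp power2_eq_square)
qed

lemma single_block_bound:
  fixes d lam a :: real
  assumes d: "1 \<le> d" and lam: "0 \<le> lam" "lam \<le> 1" and a: "0 \<le> a" "a \<le> 1"
    and small: "14 * (lam * a) \<le> sqrt d"
  shows "1 + (exp (lam * (exp a - 1)) - 1) / d \<le> 5/4"
proof -
  define c where "c = lam * (exp a - 1)"
  have "exp a - 1 \<le> a * (exp 1 - 1)"
    using exp_mult_minus_one_le[of a 1] a by simp
  also have "\<dots> \<le> a * (172/100)"
    using e_less_272 a by (intro mult_left_mono) simp_all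
  finally have "c \<le> lam * (a * (172/100))"
    unfolding c_def using lam(1) by (rule mult_left_mono)
  then have c_le: "c \<le> 172/100 * (lam * a)"
    by simp
  have c_nonneg: "0 \<le> c"
    using lam a by (simp add: c_def)
  have sqrt_le: "sqrt d \<le> d"
    using d real_sqrt_le_mono[of d "d * d"] by (simp add: mult_le_cancel_left1)
  have "exp c - 1 \<le> d / 4"
  proof (cases "c \<le> 1")
    case True
    have "exp c - 1 \<le> c * (exp 1 - 1)"
      using exp_mult_minus_one_le[of c 1] True c_nonneg by simp
    also have "\<dots> \<le> c * (172/100)"
      using e_less_272 c_nonneg by (intro mult_left_mono) simp_all
    also have "\<dots> \<le> sqrt d / 4"
      using c_le small mult_nonneg_nonneg[OF lam(1) a(1)] by linarith
    finally show ?thesis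
      using sqrt_le by simp
  next
    case False
    then have "8 < sqrt d"
      using c_le small by linarith
    then have "64 < d"
      using real_sqrt_less_iff[of 64 d] by simp
    have "exp c \<le> exp 1 * exp 1"
      using c_le lam a mult_le_one[of lam a] by (simp add: mult_exp_exp)
    also have "\<dots> \<le> 272/100 * (272/100)"
      using e_less_272 by (intro mult_mono) simp_all
    finally show ?thesis
      using \<open>64 < d\<close> by simp
  qed
  then show ?thesis
    using d by (simp add: c_def)
qed

lemma many_blocks_bound:
  fixes s b :: nat and d lam a :: real
  assumes b: "0 < b" "d \<le> 2 * s * b" and lam: "0 < lam" "lam \<le> 1" and a: "0 \<le> a" "a \<le> 1"
    and small: "58 * (lam * (real s)\<^sup>2) \<le> d"
  shows "(1 + (exp (lam * (exp a - 1)) - 1) / b) ^ s \<le> 5/4"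
proof -
  define c where "c = lam * (exp a - 1)"
  define u where "u = (exp c - 1) / b"
  have "exp a \<le> exp 1"
    using a by simp
  then have "exp a - 1 \<le> 7/4"
    using e_less_272 by linarith
  then have c: "0 \<le> c" "c \<le> lam * (7/4)"
    using lam a by (simp_all add: c_def mult_left_mono)
  then have "exp c - 1 \<le> exp (lam * (7/4)) - 1"
    by simp
  also have "\<dots> \<le> lam * (exp (7/4) - 1)"
    using lam by (intro exp_mult_minus_one_le) simp_all
  also have "\<dots> \<le> lam * (545/100)"
    using exp_seven_quarters_le lam by (intro mult_left_mono) simp_all
  finally have exp_c: "exp c - 1 \<le> lam * (545/100)" .
  have u_nonneg: "0 \<le> u"
    using c by (simp add: u_def)
  have "u * d \<le> u * (2 * s * b)"
    using b u_nonneg by (intro mult_left_mono) simp_all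
  also have "\<dots> = 2 * s * (exp c - 1)"
    using b by (simp add: u_def)
  finally have "s * (u * d) \<le> s * (2 * s * (exp c - 1))"
    by (rule mult_left_mono) simp
  then have "s * u * d \<le> 2 * (real s)\<^sup>2 * (exp c - 1)"
    by (simp add: power2_eq_square algebra_simps)
  also have "\<dots> \<le> 2 * (real s)\<^sup>2 * (lam * (545/100))"
    using exp_c by (intro mult_left_mono) simp_all
  also have "\<dots> = 109/10 * (lam * (real s)\<^sup>2)"
    by simp
  also have "\<dots> \<le> d / 5"
  proof -
    have "0 \<le> lam * (real s)\<^sup>2"
      using lam by simp
    then show ?thesis
      using small by linarith
  qed
  finally have "s * u \<le> 1/5"
  proof (cases "s = 0")
    case False
    then have "0 < lam * (real s)\<^sup>2"
      using lam by simp
    then have "0 < d"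
      using small by linarith
    then show "s * u * d \<le> d / 5 \<Longrightarrow> s * u \<le> 1/5"
      by (simp add: field_simps)
  qed simp
  have "(1 + u) ^ s \<le> exp u ^ s"
    using u_nonneg by (intro power_mono) (simp_all add: exp_ge_add_one_self)
  also have "\<dots> = exp (s * u)"
    by (simp add: exp_of_nat_mult)
  also have "\<dots> \<le> exp (1/5)"
    using \<open>s * u \<le> 1/5\<close> by simp
  also have "\<dots> \<le> 1 + 1/5 + (1/5)\<^sup>2"
    by (rule exp_bound) simp_all
  finally show ?thesis
    by (simp add: c_def u_def power2_eq_square)
qed

lemma le_two_mult_div:
  fixes s d :: nat
  assumes "0 < s" "s \<le> d"
  shows "d \<le> 2 * s * (d div s)"
proof -
  have "s \<le> s * (d div s)"
    using assms by (simp add: Suc_le_eq div_greater_zero_iff)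
  moreover have "d mod s < s"
    using assms(1) by simp
  moreover have "d = s * (d div s) + d mod s"
    by simp
  ultimately show ?thesis
    by linarith
qed

lemma detection_boundary_consequences:
  fixes d :: nat and lam \<epsilon> :: real
  assumes d: "0 < d" and lam: "1 / real d \<le> lam" "lam \<le> 1"
    and \<epsilon>: "\<epsilon>\<^sup>2 \<le> 1/16 * sqrt (real d / lam)"
  shows "0 < lam" "\<epsilon>\<^sup>2 \<le> real d / 16" "lam * \<epsilon>\<^sup>2 \<le> sqrt (real d) / 16"
    and "lam * (\<epsilon>\<^sup>2)\<^sup>2 \<le> real d / 256"
proof -
  have "0 < 1 / real d"
    using d by simp
  then show lam_pos: "0 < lam"
    using lam(1) by linarith
  have "real d / lam \<le> real d * real d"
    using d lam lam_pos by (simp add: field_simps)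
  then have "sqrt (real d / lam) \<le> real d"
    using real_sqrt_le_mono by fastforce
  then show "\<epsilon>\<^sup>2 \<le> real d / 16"
    using \<epsilon> by simp
  have "lam * sqrt (real d / lam) = sqrt (lam\<^sup>2 * (real d / lam))"
    using lam_pos by (simp only: real_sqrt_mult real_sqrt_abs abs_of_pos)
  also have "\<dots> = sqrt (lam * real d)"
    using lam_pos by (simp add: power2_eq_square)
  also have "\<dots> \<le> sqrt (real d)"
    using lam(2) lam_pos by (intro real_sqrt_le_mono mult_left_le_one_le) simp_all
  finally have "lam * sqrt (real d / lam) \<le> sqrt (real d)" .
  moreover have "lam * \<epsilon>\<^sup>2 \<le> lam * (1/16 * sqrt (real d / lam))"
    using \<epsilon> lam_pos by (intro mult_left_mono) simp_all
  ultimately show "lam * \<epsilon>\<^sup>2 \<le> sqrt (real d) / 16"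
    by simp
  have "(\<epsilon>\<^sup>2)\<^sup>2 \<le> (1/16 * sqrt (real d / lam))\<^sup>2"
    using \<epsilon> by (intro power_mono) simp_all
  then show "lam * (\<epsilon>\<^sup>2)\<^sup>2 \<le> real d / 256"
    using lam_pos by (simp add: power_divide field_simps)
qed

lemma spike_parameters_exist:
  fixes d :: nat and lam \<epsilon> :: real
  assumes d: "0 < d" and lam: "1 / real d \<le> lam" "lam \<le> 1"
    and \<epsilon>: "0 < \<epsilon>" "\<epsilon>\<^sup>2 \<le> 1/16 * sqrt (real d / lam)"
  obtains s b :: nat and a2 :: real
  where "0 < b" "s * b \<le> d" "0 \<le> a2" "\<epsilon>\<^sup>2 < s * a2"
    and "(1 + (exp (lam * (exp a2 - 1)) - 1) / b) ^ s \<le> 5/4"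
proof -
  have lam_pos: "0 < lam" and \<epsilon>_d: "\<epsilon>\<^sup>2 \<le> real d / 16"
    and \<epsilon>_lam: "lam * \<epsilon>\<^sup>2 \<le> sqrt (real d) / 16" and \<epsilon>_lam4: "lam * (\<epsilon>\<^sup>2)\<^sup>2 \<le> real d / 256"
    using detection_boundary_consequences[OF d lam \<epsilon>(2)] by simp_all
  \<comment> \<open>The factor \<open>21/20\<close> makes the separation strict while leaving room for the constants
    \<open>14\<close> and \<open>58\<close> required by the single- and many-block bounds.\<close>
  define T where "T = 21/20 * \<epsilon>\<^sup>2"
  define s where "s = nat \<lfloor>T\<rfloor> + 1"
  define b where "b = d div s"
  define a2 where "a2 = T / s"
  have T_pos: "0 < T"
    using \<epsilon> by (simp add: T_def)
  have s: "T < s" "s \<le> T + 1" "0 < s"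
    using T_pos by (simp_all add: s_def) linarith+
  have "real s < real (d + 1)"
    using s \<epsilon>_d d by (simp add: T_def)
  then have "s \<le> d"
    by (simp only: of_nat_less_iff)
  then have b: "0 < b" "s * b \<le> d" "d \<le> 2 * s * b"
    using s le_two_mult_div[of s d] by (simp_all add: b_def div_greater_zero_iff)
  have a2: "0 \<le> a2" "a2 \<le> 1" "s * a2 = T"
    using s T_pos by (simp_all add: a2_def)
  show ?thesis
  proof (rule that[OF b(1,2) a2(1)])
    show "\<epsilon>\<^sup>2 < s * a2"
      using \<epsilon> by (simp add: a2(3) T_def)
    show "(1 + (exp (lam * (exp a2 - 1)) - 1) / b) ^ s \<le> 5/4"
    proof (cases "T < 1")
      case True
      then have "s = 1"
        using s by linarith
      then have "b = d" "a2 = T"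
        by (simp_all add: b_def a2_def)
      moreover have "14 * (lam * T) \<le> sqrt (real d)"
        using \<epsilon>_lam mult_nonneg_nonneg[OF less_imp_le[OF lam_pos] zero_le_power2[of \<epsilon>]]
        by (simp add: T_def)
      ultimately show ?thesis
        using single_block_bound[of d lam T] d lam lam_pos T_pos True \<open>s = 1\<close> by simp
    next
      case False
      then have "(real s)\<^sup>2 \<le> (2 * T)\<^sup>2"
        using s by (intro power_mono) simp_all
      then have "58 * (lam * (real s)\<^sup>2) \<le> 58 * (lam * (2 * T)\<^sup>2)"
        using lam_pos by simp
      also have "\<dots> = 58 * 4 * (441/400) * (lam * (\<epsilon>\<^sup>2)\<^sup>2)"
        by (simp add: T_def power2_eq_square)
      also have "\<dots> \<le> real d"
        using \<epsilon>_lam4 by simp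
      finally have "58 * (lam * (real s)\<^sup>2) \<le> real d" .
      moreover have "real d \<le> 2 * real s * real b"
        using b(3) by (metis of_nat_le_iff of_nat_mult of_nat_numeral)
      ultimately show ?thesis
        using many_blocks_bound[of b d s lam a2] b a2 lam lam_pos by simp
    qed
  qed
qed

theorem proposition2:
  fixes lam \<epsilon> :: real
  assumes "1 / real CARD('n::finite) \<le> lam" and "lam \<le> 1"
    and "\<epsilon> > 0"
    and "\<epsilon>^2 \<le> 1/16 * sqrt (real CARD('n) / lam)"
  shows "minimax_risk lam ({0} :: (real ^ 'n) set) {\<theta>. \<forall>i. \<theta> $ i \<ge> 0} \<epsilon> \<ge> 1/2"
proof -
  have lam: "0 < lam"
    using detection_boundary_consequences(1)[OF zero_less_card_finite assms(1,2,4)] .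
  obtain s b :: nat and a2 :: real where b: "0 < b" and sb: "s * b \<le> CARD('n)"
    and a2: "0 \<le> a2" and separation: "\<epsilon>\<^sup>2 < s * a2"
    and chi: "(1 + (exp (lam * (exp a2 - 1)) - 1) / b) ^ s \<le> 5/4"
    using spike_parameters_exist[OF zero_less_card_finite assms] by blast
  obtain e :: "nat \<times> nat \<Rightarrow> 'n" where e: "inj_on e ({..<s} \<times> {..<b})"
    using card_le_inj[of "{..<s} \<times> {..<b}" "UNIV :: 'n set"] sb by auto
  define \<theta> where "\<theta> r = spike (sqrt a2) (block_support e s r)" for r
  have separation': "\<epsilon>\<^sup>2 < s * (sqrt a2)\<^sup>2"
    using separation a2 by simp
  show ?thesis
  proof (rule minimax_risk_ge_half[OF lam])
    show "\<theta> ` ({..<s} \<rightarrow>\<^sub>E {..<b}) \<subseteq> {x. \<forall>i. 0 \<le> x $ i} - enlarge {0} \<epsilon>"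
      using block_spike_separated[OF e _ _ separation'] a2
      by (auto simp: \<theta>_def)
    show "(\<integral>\<^sup>+y. ((\<Sum>r\<in>{..<s} \<rightarrow>\<^sub>E {..<b}. obs_lr (\<theta> r) y) / card ({..<s} \<rightarrow>\<^sub>E {..<b}))\<^sup>2
        \<partial>obs lam 0) \<le> ennreal (5/4)"
      using nn_integral_block_spike_mixture[OF lam b e, of "sqrt a2"] chi a2
      by (simp add: \<theta>_def ennreal_leI)
  qed (use b in \<open>auto simp: finite_PiE PiE_eq_empty_iff\<close>)
qed

end
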